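(* Let $G$ be a finite undirected graph, let $\tau\ge 1$ and $k$ be integers, and let $G'$ be the $(k,\tau)$-truss of $G$. Then for every vertex $v\in V(G')$ we have $d_\tau(v,G')\ge k-1$.
   Context: Graphs are finite, simple, undirected and unweighted. A path may repeat vertices; its length is its number of edges. For vertices $v,u$ of a graph $H$, $u$ is $\tau$-hop reachable from $v$ in $H$ if $H$ contains a path between $u$ and $v$ of length at most $\tau$. $N_\tau(v,H)$ is the set of vertices $u\neq v$ that are $\tau$-hop reachable from $v$ in $H$, and $d_\tau(v,H)=|N_\tau(v,H)|$. For an edge $e=(u,v)$ of $H$, $\Delta_\tau(e,H)=N_\tau(u,H)\cap N_\tau(v,H)$ (the $\tau$-hop common neighbors of $e$) and the higher-order support is $\mathrm{sup}_\tau(e,H)=|\Delta_\tau(e,H)|$. The $(k,\tau)$-truss of $G$ is the maximal subgraph $G'$ of $G$ such that $\mathrm{sup}_\tau(e,G')\ge k-2$ for every edge $e\in E(G')$ (supports computed inside $G'$) and no more edges of $G$ can be added while keeping this property; a subgraph is determined by its edge set, its vertex set $V(G')$ being the set of endpoints of its edges. *)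

theory Defs
  imports Main
begin

definition simple_graph :: "'a set \<Rightarrow> 'a set set \<Rightarrow> bool" where
  "simple_graph V E \<longleftrightarrow> finite V \<and> (\<forall>e\<in>E. \<exists>x y. x \<noteq> y \<and> x \<in> V \<and> y \<in> V \<and> e = {x, y})"

text \<open>A subgraph is determined by its edge set; its vertex set is the set of endpoints.\<close>

definition verts :: "'a set set \<Rightarrow> 'a set" where
  "verts H = \<Union>H"

text \<open>A path (vertices may repeat) in H, given as a nonempty vertex list; its length is
the number of edges, i.e. length of the list minus one.\<close>

definition is_path :: "'a set set \<Rightarrow> 'a list \<Rightarrow> bool" where
  "is_path H xs \<longleftrightarrow> xs \<noteq> [] \<and> (\<forall>i. Suc i < length xs \<longrightarrow> {xs ! i, xs ! Suc i} \<in> H)"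

definition hop_reachable :: "'a set set \<Rightarrow> nat \<Rightarrow> 'a \<Rightarrow> 'a \<Rightarrow> bool" where
  "hop_reachable H \<tau> v u \<longleftrightarrow>
     (\<exists>xs. is_path H xs \<and> hd xs = v \<and> last xs = u \<and> length xs - 1 \<le> \<tau>)"

definition hop_nbrs :: "nat \<Rightarrow> 'a \<Rightarrow> 'a set set \<Rightarrow> 'a set" where
  "hop_nbrs \<tau> v H = {u. u \<noteq> v \<and> hop_reachable H \<tau> v u}"

definition hop_degree :: "nat \<Rightarrow> 'a \<Rightarrow> 'a set set \<Rightarrow> nat" where
  "hop_degree \<tau> v H = card (hop_nbrs \<tau> v H)"

definition hop_support :: "nat \<Rightarrow> 'a \<Rightarrow> 'a \<Rightarrow> 'a set set \<Rightarrow> nat" where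
  "hop_support \<tau> u v H = card (hop_nbrs \<tau> u H \<inter> hop_nbrs \<tau> v H)"

definition truss_property :: "int \<Rightarrow> nat \<Rightarrow> 'a set set \<Rightarrow> bool" where
  "truss_property k \<tau> H \<longleftrightarrow> (\<forall>u v. {u, v} \<in> H \<longrightarrow> int (hop_support \<tau> u v H) \<ge> k - 2)"

definition is_truss :: "'a set set \<Rightarrow> int \<Rightarrow> nat \<Rightarrow> 'a set set \<Rightarrow> bool" where
  "is_truss E k \<tau> G' \<longleftrightarrow> G' \<subseteq> E \<and> truss_property k \<tau> G' \<and>
     (\<forall>F. G' \<subset> F \<and> F \<subseteq> E \<longrightarrow> \<not> truss_property k \<tau> F)"

end

theory Submission
  imports Defs
begin

text \<open>A vertex v of the truss lies on some edge (v,u) of it. Then u is a one-hop,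
  hence \<open>\<tau>\<close>-hop, neighbour of v, but not one of the \<open>\<tau>\<close>-hop common neighbours of
  (v,u), which are \<open>\<tau>\<close>-hop neighbours of v as well. So
  \<open>d\<^sub>\<tau>(v) \<ge> sup\<^sub>\<tau>(v,u) + 1 \<ge> k - 1\<close>.\<close>

lemma simple_graph_verts_subset:
  assumes "simple_graph V E" "H \<subseteq> E"
  shows "verts H \<subseteq> V"
proof
  fix x assume "x \<in> verts H"
  then obtain e where "e \<in> E" "x \<in> e"
    using assms(2) unfolding verts_def by blast
  then show "x \<in> V"
    using assms(1) unfolding simple_graph_def by fastforce
qed

lemma simple_graph_finite_verts:
  assumes "simple_graph V E" "H \<subseteq> E"
  shows "finite (verts H)"
  using finite_subset[OF simple_graph_verts_subset[OF assms]] assms(1)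
  unfolding simple_graph_def by (elim conjE)

lemma simple_graph_edge_at_vertex:
  assumes "simple_graph V E" "H \<subseteq> E" "v \<in> verts H"
  obtains u where "u \<noteq> v" "{v, u} \<in> H"
proof -
  obtain e where "e \<in> H" "v \<in> e"
    using assms(3) unfolding verts_def by blast
  moreover from this obtain x y where "x \<noteq> y" "e = {x, y}"
    using assms(1,2) unfolding simple_graph_def by blast
  moreover define u where "u = (if v = x then y else x)"
  ultimately have "u \<noteq> v" "{v, u} \<in> H"
    by (auto simp: insert_commute)
  then show thesis by (rule that)
qed

lemma hop_nbrs_subset_verts: "hop_nbrs \<tau> v H \<subseteq> verts H"
proof
  fix u assume "u \<in> hop_nbrs \<tau> v H"
  then obtain xs where u: "u \<noteq> v" "is_path H xs" "hd xs = v" "last xs = u"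
    unfolding hop_nbrs_def hop_reachable_def by blast
  have "xs \<noteq> []" using u(2) unfolding is_path_def by blast
  have "length xs \<noteq> 1"
  proof
    assume "length xs = 1"
    then have "hd xs = last xs" by (cases xs) auto
    then show False using u by simp
  qed
  then obtain m where m: "length xs = Suc (Suc m)"
    using \<open>xs \<noteq> []\<close> by (metis One_nat_def length_0_conv not0_implies_Suc)
  then have "{xs ! m, xs ! Suc m} \<in> H"
    using u(2) unfolding is_path_def by simp
  moreover have "xs ! Suc m = u"
    using u(4) \<open>xs \<noteq> []\<close> m by (simp add: last_conv_nth)
  ultimately show "u \<in> verts H" unfolding verts_def by blast
qed

lemma edge_in_hop_nbrs:
  assumes "{v, u} \<in> H" "u \<noteq> v" "\<tau> \<ge> 1"
  shows "u \<in> hop_nbrs \<tau> v H"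
proof -
  have "is_path H [v, u]"
    using assms(1) unfolding is_path_def by (auto simp: less_Suc_eq nth_Cons split: nat.splits)
  then show ?thesis
    using assms(2,3) unfolding hop_nbrs_def hop_reachable_def
    by (intro CollectI conjI exI[of _ "[v, u]"]) auto
qed

lemma hop_support_less_hop_degree:
  assumes "finite (verts H)" "{v, u} \<in> H" "u \<noteq> v" "\<tau> \<ge> 1"
  shows "hop_support \<tau> v u H < hop_degree \<tau> v H"
proof -
  have "finite (hop_nbrs \<tau> v H)"
    by (rule finite_subset[OF hop_nbrs_subset_verts assms(1)])
  moreover have "u \<in> hop_nbrs \<tau> v H" "u \<notin> hop_nbrs \<tau> u H"
    using edge_in_hop_nbrs[OF assms(2-4)] by (simp_all add: hop_nbrs_def)
  ultimately have "hop_nbrs \<tau> v H \<inter> hop_nbrs \<tau> u H \<subset> hop_nbrs \<tau> v H"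
    by blast
  then show ?thesis
    unfolding hop_support_def hop_degree_def
    using \<open>finite (hop_nbrs \<tau> v H)\<close> by (rule psubset_card_mono[rotated])
qed

theorem mainTheorem1:
  fixes V :: "'a set" and E :: "'a set set" and G' :: "'a set set"
    and \<tau> :: nat and k :: int and v :: 'a
  assumes "simple_graph V E"
    and "\<tau> \<ge> 1"
    and "is_truss E k \<tau> G'"
    and "v \<in> verts G'"
  shows "int (hop_degree \<tau> v G') \<ge> k - 1"
proof -
  have sub: "G' \<subseteq> E" and truss: "truss_property k \<tau> G'"
    using assms(3) unfolding is_truss_def by auto
  obtain u where u: "u \<noteq> v" "{v, u} \<in> G'"
    using simple_graph_edge_at_vertex[OF assms(1) sub assms(4)] .
  have "int (hop_support \<tau> v u G') \<ge> k - 2"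
    using truss u(2) unfolding truss_property_def by simp
  moreover have "hop_support \<tau> v u G' < hop_degree \<tau> v G'"
    by (rule hop_support_less_hop_degree[OF simple_graph_finite_verts[OF assms(1) sub] u(2,1) assms(2)])
  ultimately show ?thesis by linarith
qed

end
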